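(* Let $A$ be a real symmetric $n\times n$ matrix such that the graph $\mathcal{G}(A)$ is connected and all nonzero off-diagonal entries of $A$ have the same sign. Let $S\subseteq\{1,\dots,n\}$ and $Z=\{{\bf e}_j : j\in S\}$. Then the real linear span of $P(A,Z)$ is contained in $\mathcal{L}(A,Z)$.
   Context: ${\bf e}_j$ is the $j$th standard basis vector of $\mathbb{R}^n$. For a real symmetric $n\times n$ matrix $A=[a_{kj}]$, $\mathcal{G}(A)$ is the simple graph on $\{1,\dots,n\}$ with edges $\{kj: a_{kj}\neq0,\ k\neq j\}$. For $Z=\{{\bf z}_1,\dots,{\bf z}_s\}\subset\mathbb{R}^n$: $P(A,Z):=\{A^m{\bf z}_k{\bf z}_j^TA^\ell : 1\le k,j\le s,\ 0\le m,\ell\le n-1\}$, and $\mathcal{L}(A,Z)$ is the real Lie algebra generated by $A,{\bf z}_1{\bf z}_1^T,\dots,{\bf z}_s{\bf z}_s^T$, i.e. the smallest real vector space of matrices containing these and closed under the commutator $[X,Y]=XY-YX$. *)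

theory Defs
  imports "HOL-Analysis.Analysis"
begin

definition outer :: "real^'n \<Rightarrow> real^'n \<Rightarrow> real^'n^'n" where
  "outer u v = (\<chi> i j. u $ i * v $ j)"

definition matpow :: "real^'n^'n \<Rightarrow> nat \<Rightarrow> real^'n^'n" where
  "matpow A m = ((\<lambda>X. A ** X) ^^ m) (mat 1)"

definition commutator :: "real^'n^'n \<Rightarrow> real^'n^'n \<Rightarrow> real^'n^'n" where
  "commutator X Y = X ** Y - Y ** X"

definition graph_edges :: "real^'n^'n \<Rightarrow> ('n \<times> 'n) set" where
  "graph_edges A = {(k, j). k \<noteq> j \<and> A $ k $ j \<noteq> 0}"

definition graph_connected :: "real^'n^'n \<Rightarrow> bool" where
  "graph_connected A \<longleftrightarrow> (\<forall>k j. (k, j) \<in> (graph_edges A)\<^sup>*)"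

definition offdiag_same_sign :: "real^'n^'n \<Rightarrow> bool" where
  "offdiag_same_sign A \<longleftrightarrow>
     (\<forall>k j. k \<noteq> j \<longrightarrow> A $ k $ j \<ge> 0) \<or> (\<forall>k j. k \<noteq> j \<longrightarrow> A $ k $ j \<le> 0)"

definition Pset :: "real^'n^'n \<Rightarrow> (real^'n) set \<Rightarrow> (real^'n^'n) set" where
  "Pset A Z = {matpow A m ** outer zk zj ** matpow A l | zk zj m l.
      zk \<in> Z \<and> zj \<in> Z \<and> m \<le> CARD('n) - 1 \<and> l \<le> CARD('n) - 1}"

inductive_set lie_gen :: "(real^'n^'n) set \<Rightarrow> (real^'n^'n) set" for G where
  gen: "X \<in> G \<Longrightarrow> X \<in> lie_gen G"
| zero: "0 \<in> lie_gen G"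
| add: "X \<in> lie_gen G \<Longrightarrow> Y \<in> lie_gen G \<Longrightarrow> X + Y \<in> lie_gen G"
| scale: "X \<in> lie_gen G \<Longrightarrow> c *\<^sub>R X \<in> lie_gen G"
| bracket: "X \<in> lie_gen G \<Longrightarrow> Y \<in> lie_gen G \<Longrightarrow> commutator X Y \<in> lie_gen G"

definition LieAZ :: "real^'n^'n \<Rightarrow> (real^'n) set \<Rightarrow> (real^'n^'n) set" where
  "LieAZ A Z = lie_gen (insert A ((\<lambda>z. outer z z) ` Z))"

end

theory Submission
  imports Defs
begin

(*
  Let L be the Lie algebra generated by A and the matrix units E_jj, j in S. For an idempotent P
  the double commutator gives P X = (1/2)([P,[P,X]] + [P,X]) + P X P, and E_jj X E_jj = X_jj E_jj,
  so L is closed under multiplication by E_jj on either side. For a row matrix Y = e_j v^T one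
  has Y A = A_jj Y - E_jj [A, Y], so the vectors v with e_j v^T in L form a subspace invariant
  under A, hence under the nonnegative matrix N = s A + c I (s the common sign, c large) whose
  support graph is G(A). Connectivity then yields such a v >= 0 with v_k > 0, and
  E_jk = (1 / v_k) (e_j v^T) E_kk lies in L. Finally A^m E_kj A^l is in L by induction on m,
  using A W = [A, W] + W A and the row case for the right factor.
*)

abbreviation matrix_unit :: "'n::finite \<Rightarrow> 'n \<Rightarrow> real^'n^'n" where
  "matrix_unit j k \<equiv> outer (axis j 1) (axis k 1)"

lemma subspace_lie_gen: "subspace (lie_gen G)"
  unfolding subspace_def by (simp add: lie_gen.zero lie_gen.add lie_gen.scale)

lemma linear_outer: "linear (outer u)"
  by unfold_locales (simp_all add: outer_def vec_eq_iff algebra_simps)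

lemma outer_matrix_mult: "outer u v ** M = outer u (v v* M)"
  by (simp add: vec_eq_iff outer_def matrix_matrix_mult_def vector_matrix_mult_def sum_distrib_left mult.assoc)

lemma matrix_diff_ldistrib: "(A::real^'m^'n) ** (B - C) = A ** B - A ** C"
  by (simp add: vec_eq_iff matrix_matrix_mult_def sum_subtractf algebra_simps)

lemma matrix_diff_rdistrib: "((A::real^'m^'n) - B) ** C = A ** C - B ** C"
  by (simp add: vec_eq_iff matrix_matrix_mult_def sum_subtractf algebra_simps)

lemma commutator_commutator_idempotent:
  assumes "P ** P = P"
  shows "commutator P (commutator P X) = P ** X + X ** P - 2 *\<^sub>R (P ** X ** P)"
proof -
  have "commutator P (commutator P X) = (P ** P) ** X - P ** X ** P - P ** X ** P + X ** (P ** P)"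
    by (simp add: commutator_def matrix_diff_ldistrib matrix_diff_rdistrib matrix_mul_assoc)
  then show ?thesis
    using assms by (simp add: scaleR_2)
qed

lemma idempotent_mult_left:
  assumes "P ** P = P"
  shows "P ** X = (1/2) *\<^sub>R (commutator P (commutator P X) + commutator P X) + P ** X ** P"
  unfolding commutator_commutator_idempotent[OF assms] by (simp add: vec_eq_iff commutator_def algebra_simps)

lemma idempotent_mult_right:
  assumes "P ** P = P"
  shows "X ** P = (1/2) *\<^sub>R (commutator P (commutator P X) - commutator P X) + P ** X ** P"
  unfolding commutator_commutator_idempotent[OF assms] by (simp add: vec_eq_iff commutator_def algebra_simps)

lemma outer_mult_outer: "outer u v ** outer w x = (v \<bullet> w) *\<^sub>R outer u x"
  by (simp add: vec_eq_iff outer_def matrix_matrix_mult_def inner_vec_def sum_distrib_left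
      sum_distrib_right algebra_simps)

lemma matrix_unit_idempotent: "matrix_unit j j ** matrix_unit j j = matrix_unit j j"
  by (simp add: outer_mult_outer inner_axis_axis)

lemma axis_vector_matrix_inner_axis: "(axis i 1 v* X) \<bullet> axis j 1 = (X::real^'n^'n) $ i $ j"
  unfolding inner_axis by (simp add: vector_matrix_mult_def axis_def mult_delta_left)

lemma matrix_unit_sandwich: "matrix_unit j j ** X ** matrix_unit j j = X $ j $ j *\<^sub>R matrix_unit j j"
  by (simp only: outer_matrix_mult[of "axis j 1" "axis j 1" X] outer_mult_outer
      axis_vector_matrix_inner_axis)

lemma lie_gen_matrix_unit_mult_left:
  assumes "matrix_unit j j \<in> lie_gen G" "X \<in> lie_gen G"
  shows "matrix_unit j j ** X \<in> lie_gen G"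
  using assms by (subst idempotent_mult_left[OF matrix_unit_idempotent])
    (simp add: matrix_unit_sandwich lie_gen.add lie_gen.scale lie_gen.bracket)

lemma lie_gen_matrix_unit_mult_right:
  assumes "matrix_unit j j \<in> lie_gen G" "X \<in> lie_gen G"
  shows "X ** matrix_unit j j \<in> lie_gen G"
  using assms by (subst idempotent_mult_right[OF matrix_unit_idempotent])
    (simp add: matrix_unit_sandwich lie_gen.add lie_gen.scale lie_gen.bracket
      subspace_diff[OF subspace_lie_gen])

lemma outer_axis_mult_eq:
  "outer (axis j 1) v ** A =
     A $ j $ j *\<^sub>R outer (axis j 1) v - matrix_unit j j ** commutator A (outer (axis j 1) v)"
proof -
  have "matrix_unit j j ** A ** outer (axis j 1) v = A $ j $ j *\<^sub>R outer (axis j 1) v"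
    by (simp only: outer_matrix_mult[of "axis j 1" "axis j 1" A] outer_mult_outer
        axis_vector_matrix_inner_axis)
  moreover have "matrix_unit j j ** outer (axis j 1) v = outer (axis j 1) v"
    by (simp add: outer_mult_outer inner_axis_axis)
  ultimately show ?thesis
    by (simp add: commutator_def matrix_diff_ldistrib matrix_mul_assoc)
qed

lemma lie_gen_outer_axis_vector_matrix_mult:
  assumes "A \<in> lie_gen G" "matrix_unit j j \<in> lie_gen G" "outer (axis j 1) v \<in> lie_gen G"
  shows "outer (axis j 1) (v v* A) \<in> lie_gen G"
  unfolding outer_matrix_mult[symmetric]
  using assms by (subst outer_axis_mult_eq) (intro subspace_diff[OF subspace_lie_gen]
      lie_gen.scale lie_gen.bracket lie_gen_matrix_unit_mult_left)

lemma matpow_Suc: "matpow A (Suc m) = A ** matpow A m"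
  by (simp add: matpow_def)

lemma matpow_Suc_right: "matpow A (Suc m) = matpow A m ** A"
proof (induction m)
  case 0
  show ?case by (simp add: matpow_def)
next
  case (Suc m)
  have "matpow A (Suc (Suc m)) = A ** (matpow A m ** A)"
    by (simp only: matpow_Suc[of A "Suc m"] Suc.IH)
  then show ?case
    by (simp only: matrix_mul_assoc matpow_Suc)
qed

lemma lie_gen_outer_axis_vector_matpow:
  assumes "A \<in> lie_gen G" "matrix_unit j j \<in> lie_gen G" "outer (axis j 1) v \<in> lie_gen G"
  shows "outer (axis j 1) (v v* matpow A l) \<in> lie_gen G"
proof (induction l)
  case 0
  then show ?case using assms(3) by (simp add: matpow_def)
next
  case (Suc l)
  have "outer (axis j 1) ((v v* matpow A l) v* A) \<in> lie_gen G"
    by (rule lie_gen_outer_axis_vector_matrix_mult[OF assms(1,2) Suc])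
  then show ?case
    by (simp add: matpow_Suc_right vector_matrix_mul_assoc)
qed

lemma lie_gen_matpow_mult_outer_axis_mult_matpow:
  assumes "A \<in> lie_gen G" "matrix_unit j j \<in> lie_gen G" "outer (axis j 1) v \<in> lie_gen G"
  shows "matpow A m ** outer (axis j 1) v ** matpow A l \<in> lie_gen G"
proof (induction m arbitrary: l)
  case 0
  then show ?case
    using lie_gen_outer_axis_vector_matpow[OF assms] by (simp add: matpow_def outer_matrix_mult)
next
  case (Suc m)
  let ?W = "matpow A m ** outer (axis j 1) v ** matpow A l"
  have "matpow A (Suc m) ** outer (axis j 1) v ** matpow A l = A ** ?W"
    by (simp add: matpow_Suc matrix_mul_assoc)
  also have "\<dots> = commutator A ?W + ?W ** A"
    by (simp add: commutator_def)
  also have "?W ** A = matpow A m ** outer (axis j 1) v ** matpow A (Suc l)"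
    by (simp add: matpow_Suc_right matrix_mul_assoc)
  finally show ?case
    using Suc assms(1) by (simp add: lie_gen.add lie_gen.bracket)
qed

lemma nonneg_matrix_reach_positive:
  fixes N :: "real^'n^'n"
  assumes nonneg: "\<And>a b. 0 \<le> N $ a $ b"
    and invariant: "\<And>v. v \<in> V \<Longrightarrow> N *v v \<in> V"
    and start: "axis j 1 \<in> V"
    and edges: "\<And>a b. (a, b) \<in> R \<Longrightarrow> 0 < N $ b $ a"
    and path: "(j, k) \<in> R\<^sup>*"
  shows "\<exists>v\<in>V. (\<forall>i. 0 \<le> v $ i) \<and> 0 < v $ k"
  using path
proof (induction rule: rtrancl_induct)
  case base
  show ?case using start by (intro bexI[of _ "axis j 1"]) (auto simp: axis_def)
next
  case (step b e)
  then obtain v where v: "v \<in> V" "\<forall>i. 0 \<le> v $ i" "0 < v $ b" by blast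
  have "0 < N $ e $ b * v $ b"
    using edges[OF step(2)] v(3) by simp
  also have "\<dots> \<le> (N *v v) $ e"
    unfolding matrix_vector_mult_def using v(2) nonneg
    by (simp add: member_le_sum[where f="\<lambda>x. N $ e $ x * v $ x"])
  finally have "0 < (N *v v) $ e" .
  moreover have "\<forall>i. 0 \<le> (N *v v) $ i"
    using v(2) nonneg by (simp add: matrix_vector_mult_def sum_nonneg)
  ultimately show ?case
    using invariant[OF v(1)] by blast
qed

lemma outer_mult_matrix_unit: "outer u v ** matrix_unit k k = v $ k *\<^sub>R outer u (axis k 1)"
  by (simp add: outer_mult_outer inner_axis)

lemma lie_gen_outer_axis_of_component:
  assumes "matrix_unit k k \<in> lie_gen G" "outer u v \<in> lie_gen G" "v $ k \<noteq> 0"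
  shows "outer u (axis k 1) \<in> lie_gen G"
proof -
  have "v $ k *\<^sub>R outer u (axis k 1) \<in> lie_gen G"
    using lie_gen_matrix_unit_mult_right[OF assms(1,2)] by (simp add: outer_mult_matrix_unit)
  then have "inverse (v $ k) *\<^sub>R v $ k *\<^sub>R outer u (axis k 1) \<in> lie_gen G"
    by (rule lie_gen.scale)
  then show ?thesis
    using assms(3) by simp
qed

lemma lie_gen_matrix_unit_connected:
  fixes A :: "real^'n^'n"
  assumes symm: "transpose A = A" and conn: "graph_connected A" and sign: "offdiag_same_sign A"
    and A: "A \<in> lie_gen G" and Ej: "matrix_unit j j \<in> lie_gen G" and Ek: "matrix_unit k k \<in> lie_gen G"
  shows "matrix_unit j k \<in> lie_gen G"
proof -
  obtain s :: real where s: "s = 1 \<or> s = -1" "\<And>a b. a \<noteq> b \<Longrightarrow> 0 \<le> s * A $ a $ b"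
    using sign unfolding offdiag_same_sign_def
    by (elim disjE) (auto intro: that[of 1] that[of "-1"])
  define c where "c = (\<Sum>a\<in>UNIV. \<bar>A $ a $ a\<bar>)"
  define N where "N = s *\<^sub>R A + c *\<^sub>R mat 1"
  have N_component: "N $ a $ b = s * A $ a $ b + (if a = b then c else 0)" for a b
    by (simp add: N_def mat_def)
  have "0 \<le> N $ a $ b" for a b
  proof (cases "a = b")
    case True
    have "\<bar>A $ a $ a\<bar> \<le> c"
      unfolding c_def by (rule member_le_sum) auto
    then show ?thesis
      using True s(1) by (auto simp: N_component)
  next
    case False
    then show ?thesis using s(2) by (simp add: N_component)
  qed
  moreover have "outer (axis j 1) (N *v v) \<in> lie_gen G" if "outer (axis j 1) v \<in> lie_gen G" for v
  proof -
    have "N *v v = s *\<^sub>R (v v* A) + c *\<^sub>R v"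
      using symm transpose_matrix_vector[of A v]
      by (simp add: N_def matrix_vector_mult_add_rdistrib flip: scaleR_matrix_vector_assoc)
    then show ?thesis
      using that lie_gen_outer_axis_vector_matrix_mult[OF A Ej that]
      by (simp add: linear_add[OF linear_outer] linear_scale[OF linear_outer] lie_gen.add lie_gen.scale)
  qed
  moreover have "0 < N $ b $ a" if "(a, b) \<in> graph_edges A" for a b
  proof -
    have "A $ b $ a = A $ a $ b"
      using symm by (metis transpose_def vec_lambda_beta)
    then show ?thesis
      using that s(1) s(2)[of b a] by (auto simp: graph_edges_def N_component)
  qed
  moreover have "(j, k) \<in> (graph_edges A)\<^sup>*"
    using conn unfolding graph_connected_def by blast
  ultimately obtain v where "outer (axis j 1) v \<in> lie_gen G" "0 < v $ k"
    using nonneg_matrix_reach_positive[of N "{v. outer (axis j 1) v \<in> lie_gen G}" j "graph_edges A" k] Ej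
    by auto
  then show ?thesis
    using lie_gen_outer_axis_of_component[OF Ek] by simp
qed

theorem lemma3p6:
  fixes A :: "real^'n^'n" and S :: "'n set"
  assumes "transpose A = A"
    and "graph_connected A"
    and "offdiag_same_sign A"
  shows "span (Pset A ((\<lambda>j. axis j 1) ` S)) \<subseteq> LieAZ A ((\<lambda>j. axis j 1) ` S)"
proof (rule span_minimal)
  let ?G = "insert A ((\<lambda>z. outer z z) ` ((\<lambda>j. axis j 1) ` S))"
  have A: "A \<in> lie_gen ?G" and E: "\<And>j. j \<in> S \<Longrightarrow> matrix_unit j j \<in> lie_gen ?G"
    by (auto intro: lie_gen.gen)
  show "subspace (LieAZ A ((\<lambda>j. axis j 1) ` S))"
    unfolding LieAZ_def by (rule subspace_lie_gen)
  show "Pset A ((\<lambda>j. axis j 1) ` S) \<subseteq> LieAZ A ((\<lambda>j. axis j 1) ` S)"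
  proof
    fix X
    assume "X \<in> Pset A ((\<lambda>j. axis j 1) ` S)"
    then obtain k j m l where "k \<in> S" "j \<in> S"
      and X: "X = matpow A m ** matrix_unit k j ** matpow A l"
      unfolding Pset_def by blast
    then show "X \<in> LieAZ A ((\<lambda>j. axis j 1) ` S)"
      unfolding LieAZ_def
      using lie_gen_matpow_mult_outer_axis_mult_matpow[OF A E lie_gen_matrix_unit_connected[OF assms A E E]]
      by simp
  qed
qed

end
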